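(* Let $\Gamma$ be a semigroup with identity $e$, $\rho:\Gamma\to\mathrm{End}(G)$ an endomorphism action with $\rho(e)=\mathrm{Id}$ on a solenoid $G$, and $A$ a $\rho$-basis of $\widehat G$. Then: (1) $\rho$ is expansive if and only if $B_A(\epsilon)=\{e\}$ for some $\epsilon>0$; (2) $\rho_e$ has a non-trivial bounded orbit in $L(G)$ (i.e. some $p\ne 0$ with $\{\rho_e(\gamma)p:\gamma\in\Gamma\}$ bounded) if and only if $B^*_A(C)\ne\{0\}$ for some $C>0$.
   Context: A solenoid is a compact connected finite-dimensional metrizable abelian group (dual $\widehat G$ torsion-free of finite rank). $L(G)$ is the real vector space of homomorphisms $\widehat G\to\mathbb R$; $\widehat\rho(\gamma)(\chi)=\chi\circ\rho(\gamma)$ and $\rho_e(\gamma)(p)(\chi)=p(\chi\circ\rho(\gamma))$. A $\rho$-basis is a set $A\subset\widehat G$ generating $\widehat G$ as an abelian group with $A=\bigcup_{\gamma}\widehat\rho(\gamma)(F)$ for some finite $F\subset\widehat G$. Let $\delta:\mathbb S^1\to\mathbb R$, $\delta(z)=\inf\{|t|:t\in\mathbb R,e^{2\pi it}=z\}$. For $A\subset\widehat G$ and $r>0$: $B_A(r)=\{g\in G:\sup_{\chi\in A}\delta(\chi(g))<r\}$ and $B^*_A(r)=\{p\in L(G):\sup_{\chi\in A}|p(\chi)|<r\}$. The action is expansive if there is a neighborhood $U$ of the identity with $\bigcap_{\gamma}\rho(\gamma)^{-1}(U)=\{e\}$. *)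

theory Defs
  imports "HOL-Analysis.Analysis"
begin

text \<open>The dual group \<open>\<widehat>G\<close> is modelled as an abelian group type 'd.
  The solenoid G is the group of characters of 'd, i.e. homomorphisms
  'd \<rightarrow> S^1 (S^1 the complex unit circle), with the topology of pointwise
  convergence (compact-open topology for discrete 'd). Pontryagin duality
  identifies \<open>\<chi>(g)\<close> with \<open>g \<chi>\<close>.\<close>

fun nmul :: "nat \<Rightarrow> 'd::ab_group_add \<Rightarrow> 'd" where
  "nmul 0 x = 0"
| "nmul (Suc n) x = x + nmul n x"

inductive_set gen_subgroup :: "'d::ab_group_add set \<Rightarrow> 'd set" for A where
  gen_zero: "0 \<in> gen_subgroup A"
| gen_base: "a \<in> A \<Longrightarrow> a \<in> gen_subgroup A"
| gen_diff: "x \<in> gen_subgroup A \<Longrightarrow> y \<in> gen_subgroup A \<Longrightarrow> x - y \<in> gen_subgroup A"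

definition torsion_free :: "'d::ab_group_add itself \<Rightarrow> bool" where
  "torsion_free _ \<longleftrightarrow> (\<forall>(x::'d) n. n > 0 \<longrightarrow> nmul n x = 0 \<longrightarrow> x = 0)"

definition finite_rank :: "'d::ab_group_add itself \<Rightarrow> bool" where
  "finite_rank _ \<longleftrightarrow> (\<exists>S::'d set. finite S \<and> (\<forall>x. \<exists>n>0. nmul n x \<in> gen_subgroup S))"

definition solenoid :: "('d::ab_group_add \<Rightarrow> complex) set" where
  "solenoid = {g. (\<forall>x. cmod (g x) = 1) \<and> (\<forall>x y. g (x + y) = g x * g y)}"

definition sol_top :: "('d::ab_group_add \<Rightarrow> complex) topology" where
  "sol_top = subtopology (product_topology (\<lambda>_. euclidean) UNIV) solenoid"

definition sol_id :: "'d \<Rightarrow> complex" where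
  "sol_id = (\<lambda>_. 1)"

definition LG :: "('d::ab_group_add \<Rightarrow> real) set" where
  "LG = {p. \<forall>x y. p (x + y) = p x + p y}"

definition additive_endo :: "('d::ab_group_add \<Rightarrow> 'd) \<Rightarrow> bool" where
  "additive_endo f \<longleftrightarrow> (\<forall>x y. f (x + y) = f x + f y)"

text \<open>An endomorphism action \<rho> of the monoid 'g on G, given through its dual
  action \<open>\<phi> = \<widehat>\<rho>\<close> on \<open>\<widehat>G\<close>: \<open>\<rho>(\<gamma>) g = g \<circ> \<phi>(\<gamma>)\<close>.\<close>
definition rho :: "('g \<Rightarrow> 'd \<Rightarrow> 'd) \<Rightarrow> 'g \<Rightarrow> ('d \<Rightarrow> complex) \<Rightarrow> ('d \<Rightarrow> complex)" where
  "rho \<phi> \<gamma> g = g \<circ> \<phi> \<gamma>"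

definition rho_e :: "('g \<Rightarrow> 'd \<Rightarrow> 'd) \<Rightarrow> 'g \<Rightarrow> ('d \<Rightarrow> real) \<Rightarrow> ('d \<Rightarrow> real)" where
  "rho_e \<phi> \<gamma> p = p \<circ> \<phi> \<gamma>"

definition endo_action :: "('g::monoid_mult \<Rightarrow> 'd::ab_group_add \<Rightarrow> 'd) \<Rightarrow> bool" where
  "endo_action \<phi> \<longleftrightarrow> (\<forall>\<gamma>. additive_endo (\<phi> \<gamma>))
     \<and> (\<forall>\<gamma>1 \<gamma>2. rho \<phi> (\<gamma>1 * \<gamma>2) = rho \<phi> \<gamma>1 \<circ> rho \<phi> \<gamma>2)
     \<and> \<phi> 1 = id"

definition rho_basis :: "('g \<Rightarrow> 'd::ab_group_add \<Rightarrow> 'd) \<Rightarrow> 'd set \<Rightarrow> bool" where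
  "rho_basis \<phi> A \<longleftrightarrow> gen_subgroup A = UNIV \<and>
     (\<exists>F. finite F \<and> A = (\<Union>\<gamma>. \<phi> \<gamma> ` F))"

definition delta :: "complex \<Rightarrow> real" where
  "delta z = Inf {\<bar>t\<bar> | t::real. exp (2 * pi * \<i> * complex_of_real t) = z}"

text \<open>\<open>sup_{x\<in>A} f \<chi> < r\<close> written out as: some s < r bounds all values.\<close>
definition B_A :: "'d set \<Rightarrow> real \<Rightarrow> ('d::ab_group_add \<Rightarrow> complex) set" where
  "B_A A r = {g \<in> solenoid. \<exists>s<r. \<forall>x\<in>A. delta (g x) \<le> s}"

definition B_star_A :: "'d set \<Rightarrow> real \<Rightarrow> ('d::ab_group_add \<Rightarrow> real) set" where
  "B_star_A A r = {p \<in> LG. \<exists>s<r. \<forall>x\<in>A. \<bar>p x\<bar> \<le> s}"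

definition expansive :: "('g \<Rightarrow> 'd::ab_group_add \<Rightarrow> 'd) \<Rightarrow> bool" where
  "expansive \<phi> \<longleftrightarrow> (\<exists>U. openin sol_top U \<and> sol_id \<in> U \<and>
     (\<Inter>\<gamma>. {g \<in> solenoid. rho \<phi> \<gamma> g \<in> U}) = {sol_id})"

text \<open>Boundedness in the finite-dimensional space L(G) (product topology on \<open>\<real>^{\<widehat>G}\<close>):
  coordinatewise boundedness.\<close>
definition bounded_orbit :: "('g \<Rightarrow> 'd::ab_group_add \<Rightarrow> 'd) \<Rightarrow> ('d \<Rightarrow> real) \<Rightarrow> bool" where
  "bounded_orbit \<phi> p \<longleftrightarrow> (\<forall>x. \<exists>M. \<forall>\<gamma>. \<bar>rho_e \<phi> \<gamma> p x\<bar> \<le> M)"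

end

theory Submission
  imports Defs
begin

text \<open>For a character g of the dual group, x \<mapsto> delta (g x) is a group seminorm on the dual,
  and so is x \<mapsto> |p x| for p \<in> L(G). If N is any group seminorm bounded by s on A, then
  N x \<le> L(x) s for every x in the group generated by A, with L(x) depending only on x (the
  length of a word for x). As A is invariant under the dual action, the same bound holds along the
  whole orbit of x. Hence smallness on A controls every orbit of finitely many coordinates, which is
  all a neighbourhood of the identity in the product topology sees; conversely, A is the orbit of a
  finite set F, and a neighbourhood defined by finitely many coordinates in F controls all of A.\<close>

lemma delta_le_abs:
  assumes "exp (2 * pi * \<i> * complex_of_real t) = z"
  shows "delta z \<le> \<bar>t\<bar>"
  unfolding delta_def using assms by (intro cInf_lower) (auto intro: bdd_belowI[where m = 0])

lemma exp_2pi_eq_imp_int_diff: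
  fixes t u :: real
  assumes "exp (2 * pi * \<i> * complex_of_real t) = exp (2 * pi * \<i> * complex_of_real u)"
  obtains n :: int where "t = u + of_int n"
proof -
  obtain n :: int where
    "2 * pi * \<i> * complex_of_real t = 2 * pi * \<i> * complex_of_real u + (of_int (2 * n) * pi) * \<i>"
    using assms exp_eq by blast
  from arg_cong[where f = Im, OF this] have "2 * pi * t = 2 * pi * (u + n)"
    by (simp add: algebra_simps)
  then show thesis using that by simp
qed

lemma delta_attained:
  assumes "cmod z = 1"
  obtains t where "exp (2 * pi * \<i> * complex_of_real t) = z" "\<bar>t\<bar> \<le> 1/2" "delta z = \<bar>t\<bar>"
proof -
  define t where "t = Arg z / (2 * pi)"
  have z: "exp (2 * pi * \<i> * complex_of_real t) = z"
    using Arg_eq[of z] assms by (fastforce simp: t_def mult_ac)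
  have t: "\<bar>t\<bar> \<le> 1/2"
    using mpi_less_Arg[of z] Arg_le_pi[of z] by (auto simp: t_def abs_le_iff field_simps)
  have "\<bar>t\<bar> \<le> \<bar>u\<bar>" if "exp (2 * pi * \<i> * complex_of_real u) = z" for u
  proof -
    have "exp (2 * pi * \<i> * complex_of_real u) = exp (2 * pi * \<i> * complex_of_real t)"
      using that z by simp
    then obtain n :: int where "u = t + of_int n"
      by (rule exp_2pi_eq_imp_int_diff)
    moreover have "n = 0 \<or> \<bar>real_of_int n\<bar> \<ge> 1" by linarith
    ultimately show ?thesis using t by auto
  qed
  then have "delta z = \<bar>t\<bar>"
    unfolding delta_def using z by (intro cInf_eq_minimum) auto
  with z t that show thesis by blast
qed

lemma delta_one: "delta 1 = 0"
  using delta_le_abs[of 0 1] delta_attained[of 1] by fastforce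

lemma delta_divide_le:
  assumes "cmod z = 1" "cmod w = 1"
  shows "delta (z / w) \<le> delta z + delta w"
proof -
  obtain t u where t: "exp (2 * pi * \<i> * complex_of_real t) = z" "delta z = \<bar>t\<bar>"
    and u: "exp (2 * pi * \<i> * complex_of_real u) = w" "delta w = \<bar>u\<bar>"
    using delta_attained[OF assms(1)] delta_attained[OF assms(2)] by metis
  have "exp (2 * pi * \<i> * complex_of_real (t - u)) = z / w"
    using t u by (simp add: algebra_simps exp_diff)
  then have "delta (z / w) \<le> \<bar>t - u\<bar>" by (rule delta_le_abs)
  with t u show ?thesis by linarith
qed

lemma norm_minus_one_le_delta:
  assumes "cmod z = 1"
  shows "cmod (z - 1) \<le> 2 * pi * delta z"
proof -
  obtain t where t: "exp (2 * pi * \<i> * complex_of_real t) = z" "delta z = \<bar>t\<bar>"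
    using delta_attained[OF assms] by blast
  have "cmod (z - 1) = 2 * \<bar>sin (2 * pi * t / 2)\<bar>"
    using dist_exp_i_1[of "2 * pi * t"] t by (simp add: mult_ac)
  also have "\<dots> \<le> 2 * \<bar>2 * pi * t / 2\<bar>" using abs_sin_x_le_abs_x by simp
  also have "\<dots> = 2 * pi * delta z" using t by (simp add: abs_mult)
  finally show ?thesis .
qed

lemma delta_less_near_one:
  assumes "0 < s"
  obtains r where "r > 0" "\<And>z. cmod z = 1 \<Longrightarrow> cmod (z - 1) < r \<Longrightarrow> delta z < s"
proof -
  define s' where "s' = min s (1/2)"
  have s': "0 < s'" "s' \<le> 1/2" "s' \<le> s" using assms by (auto simp: s'_def)
  have "delta z < s'" if z: "cmod z = 1" and close: "cmod (z - 1) < 1 - cos (2 * pi * s')" for z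
  proof -
    obtain t where t: "exp (2 * pi * \<i> * complex_of_real t) = z" "\<bar>t\<bar> \<le> 1/2" "delta z = \<bar>t\<bar>"
      using delta_attained[OF z] by blast
    have "1 - Re z \<le> cmod (z - 1)"
      using complex_Re_le_cmod[of "1 - z"] by (simp add: norm_minus_commute)
    moreover have "Re z = cos (2 * pi * t)"
      using t(1) by (auto simp: Re_exp)
    moreover have "cos (2 * pi * t) = cos (2 * pi * \<bar>t\<bar>)"
      by (simp add: abs_if)
    ultimately have "cos (2 * pi * s') < cos (2 * pi * \<bar>t\<bar>)" using close by linarith
    then have "2 * pi * \<bar>t\<bar> < 2 * pi * s'"
      using cos_mono_less_eq[of "2 * pi * s'" "2 * pi * \<bar>t\<bar>"] s' t(2) by simp
    with t(3) show ?thesis by simp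
  qed
  moreover have "cos (2 * pi * s') < 1"
    using cos_mono_less_eq[of "2 * pi * s'" 0] s' by simp
  ultimately show thesis using that[of "1 - cos (2 * pi * s')"] s'(3) by force
qed

lemma solenoid_norm: "g \<in> solenoid \<Longrightarrow> cmod (g x) = 1"
  by (simp add: solenoid_def)

lemma solenoid_diff:
  assumes "g \<in> solenoid"
  shows "g (x - y) = g x / g y"
proof -
  have "g y \<noteq> 0" using solenoid_norm[OF assms, of y] by auto
  moreover have "g (x - y + y) = g (x - y) * g y"
    using assms by (simp only: solenoid_def mem_Collect_eq)
  ultimately show ?thesis by (simp add: field_simps)
qed

lemma solenoid_zero: "g \<in> solenoid \<Longrightarrow> g 0 = 1"
  using solenoid_diff[of g 0 0] solenoid_norm[of g 0] by (auto split: if_splits)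

lemma sol_id_in_solenoid: "sol_id \<in> solenoid"
  by (simp add: solenoid_def sol_id_def)

lemma solenoid_comp_additive:
  "g \<in> solenoid \<Longrightarrow> additive_endo f \<Longrightarrow> g \<circ> f \<in> solenoid"
  by (simp add: solenoid_def additive_endo_def)

definition group_seminorm :: "('d::ab_group_add \<Rightarrow> real) \<Rightarrow> bool" where
  "group_seminorm N \<longleftrightarrow> N 0 = 0 \<and> (\<forall>x y. N (x - y) \<le> N x + N y)"

lemma group_seminorm_delta:
  "g \<in> solenoid \<Longrightarrow> group_seminorm (\<lambda>x. delta (g x))"
  by (simp add: group_seminorm_def solenoid_zero delta_one solenoid_diff delta_divide_le solenoid_norm)

lemma group_seminorm_abs_LG:
  assumes "p \<in> LG"
  shows "group_seminorm (\<lambda>x. \<bar>p x\<bar>)"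
proof -
  have "p (x - y) = p x - p y" for x y
    using assms[unfolded LG_def, simplified, rule_format, of "x - y" y] by simp
  moreover from this[of 0 0] have "p 0 = 0" by simp
  ultimately show ?thesis by (auto simp: group_seminorm_def)
qed

lemma additive_endo_diff: "additive_endo f \<Longrightarrow> f (x - y) = f x - f y"
  unfolding additive_endo_def by (drule spec[of _ "x - y"], drule spec[of _ y]) simp

lemma group_seminorm_comp_additive:
  assumes "group_seminorm N" "additive_endo f"
  shows "group_seminorm (N \<circ> f)"
proof -
  have "f (x - y) = f x - f y" for x y
    using assms(2) by (rule additive_endo_diff)
  moreover from this[of 0 0] have "f 0 = 0" by simp
  ultimately show ?thesis using assms(1) by (simp add: group_seminorm_def)
qed

definition seminorm_bounded_by :: "'d::ab_group_add set \<Rightarrow> 'd \<Rightarrow> real \<Rightarrow> bool" where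
  "seminorm_bounded_by A x L \<longleftrightarrow>
     (\<forall>N s. group_seminorm N \<longrightarrow> (\<forall>a\<in>A. N a \<le> s) \<longrightarrow> N x \<le> L * s)"

lemma gen_subgroup_seminorm_bound:
  assumes "x \<in> gen_subgroup A"
  shows "\<exists>L\<ge>0. seminorm_bounded_by A x L"
  using assms
proof induction
  case gen_zero
  have "seminorm_bounded_by A 0 0"
    by (simp add: seminorm_bounded_by_def group_seminorm_def)
  then show ?case by (intro exI[of _ 0]) simp
next
  case (gen_base a)
  then have "seminorm_bounded_by A a 1"
    by (simp add: seminorm_bounded_by_def)
  then show ?case by (intro exI[of _ 1]) simp
next
  case (gen_diff x y)
  obtain L1 L2 where L: "L1 \<ge> 0" "L2 \<ge> 0"
    and x: "seminorm_bounded_by A x L1" and y: "seminorm_bounded_by A y L2"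
    using gen_diff.IH by auto
  have "seminorm_bounded_by A (x - y) (L1 + L2)"
    unfolding seminorm_bounded_by_def
  proof (intro allI impI)
    fix N s assume N: "group_seminorm N" and s: "\<forall>a\<in>A. N a \<le> s"
    have "N x \<le> L1 * s" "N y \<le> L2 * s"
      using x y N s by (simp_all add: seminorm_bounded_by_def)
    moreover have "N (x - y) \<le> N x + N y" using N by (simp add: group_seminorm_def)
    ultimately show "N (x - y) \<le> (L1 + L2) * s" by (simp add: distrib_right)
  qed
  with L show ?case by (intro exI[of _ "L1 + L2"]) simp
qed

lemma seminorm_bounded_by_mono:
  assumes "seminorm_bounded_by A x L" "L \<le> L'" "group_seminorm N" "\<forall>a\<in>A. N a \<le> s" "0 \<le> s"
  shows "N x \<le> L' * s"
proof -
  have "N x \<le> L * s" using assms(1,3,4) by (simp add: seminorm_bounded_by_def)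
  also have "\<dots> \<le> L' * s" using assms(2,5) by (rule mult_right_mono)
  finally show ?thesis .
qed

lemma gen_subgroup_seminorm_bound_finite:
  assumes "finite K" "K \<subseteq> gen_subgroup A"
  obtains L where "L \<ge> 0"
    "\<And>N s x. group_seminorm N \<Longrightarrow> \<forall>a\<in>A. N a \<le> s \<Longrightarrow> 0 \<le> s \<Longrightarrow> x \<in> K \<Longrightarrow> N x \<le> L * s"
proof -
  from assms(2) have "\<forall>x\<in>K. \<exists>L. L \<ge> 0 \<and> seminorm_bounded_by A x L"
    using gen_subgroup_seminorm_bound by blast
  then obtain L where L: "\<And>x. x \<in> K \<Longrightarrow> L x \<ge> 0 \<and> seminorm_bounded_by A x (L x)"
    by metis
  have "L x \<le> sum L K" if "x \<in> K" for x
    using L assms(1) that by (intro member_le_sum) auto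
  moreover have "sum L K \<ge> 0" using L by (intro sum_nonneg) auto
  ultimately show thesis
    using that[of "sum L K"] L seminorm_bounded_by_mono[of A _ _ "sum L K"] by blast
qed

lemma endo_action_additive: "endo_action \<phi> \<Longrightarrow> additive_endo (\<phi> \<gamma>)"
  by (simp add: endo_action_def)

lemma endo_action_mult:
  fixes \<phi> :: "'g::monoid_mult \<Rightarrow> 'd::ab_group_add \<Rightarrow> 'd"
  assumes "endo_action \<phi>"
  shows "\<phi> (\<alpha> * \<beta>) x = \<phi> \<beta> (\<phi> \<alpha> x)"
proof -
  \<comment> \<open>\<open>rho\<close> acts on all functions, so the composition law can be tested on an indicator.\<close>
  define g :: "'d \<Rightarrow> complex" where "g y = (if y = \<phi> \<beta> (\<phi> \<alpha> x) then 1 else 0)" for y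
  have "rho \<phi> (\<alpha> * \<beta>) g x = (rho \<phi> \<alpha> \<circ> rho \<phi> \<beta>) g x"
    using assms by (simp add: endo_action_def)
  then show ?thesis by (simp add: rho_def g_def split: if_splits)
qed

lemma rho_basis_invariant:
  assumes "endo_action \<phi>" "rho_basis \<phi> A" "a \<in> A"
  shows "\<phi> \<gamma> a \<in> A"
proof -
  obtain F where A: "A = (\<Union>\<gamma>. \<phi> \<gamma> ` F)"
    using assms(2) by (auto simp: rho_basis_def)
  then obtain \<delta> f where "f \<in> F" "a = \<phi> \<delta> f" using assms(3) by blast
  then have "\<phi> \<gamma> a = \<phi> (\<delta> * \<gamma>) f" by (simp add: endo_action_mult[OF assms(1)])
  with \<open>f \<in> F\<close> A show ?thesis by blast
qed

lemma orbit_seminorm_bound: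
  assumes "endo_action \<phi>" "rho_basis \<phi> A" "finite K"
  obtains L where "L \<ge> 0"
    "\<And>N s \<gamma> x. group_seminorm N \<Longrightarrow> \<forall>a\<in>A. N a \<le> s \<Longrightarrow> 0 \<le> s \<Longrightarrow> x \<in> K \<Longrightarrow> N (\<phi> \<gamma> x) \<le> L * s"
proof -
  have "K \<subseteq> gen_subgroup A" using assms(2) by (simp add: rho_basis_def)
  then obtain L where L: "L \<ge> 0"
    "\<And>N s x. group_seminorm N \<Longrightarrow> \<forall>a\<in>A. N a \<le> s \<Longrightarrow> 0 \<le> s \<Longrightarrow> x \<in> K \<Longrightarrow> N x \<le> L * s"
    using gen_subgroup_seminorm_bound_finite assms(3) by metis
  have "(N \<circ> \<phi> \<gamma>) x \<le> L * s"
    if "group_seminorm N" "\<forall>a\<in>A. N a \<le> s" "0 \<le> s" "x \<in> K" for N s \<gamma> x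
  proof (rule L(2))
    show "group_seminorm (N \<circ> \<phi> \<gamma>)"
      using that(1) endo_action_additive[OF assms(1)] by (rule group_seminorm_comp_additive)
    show "\<forall>a\<in>A. (N \<circ> \<phi> \<gamma>) a \<le> s"
      using that(2) rho_basis_invariant[OF assms(1,2)] by simp
  qed (use that in auto)
  with L(1) that show thesis by simp
qed

lemma openin_cylinder_ball:
  assumes "finite K"
  shows "openin (product_topology (\<lambda>_. euclidean) UNIV)
    {g :: 'i \<Rightarrow> 'a::metric_space. \<forall>k\<in>K. dist (g k) (f k) < r}"
proof -
  have "{g. \<forall>k\<in>K. dist (g k) (f k) < r} = PiE UNIV (\<lambda>i. if i \<in> K then ball (f i) r else UNIV)"
    by (auto simp: PiE_def extensional_def dist_commute split: if_splits)
  moreover have "finite {i. (if i \<in> K then ball (f i) r else UNIV) \<noteq> UNIV}"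
    using assms by (rule finite_subset[rotated]) auto
  ultimately show ?thesis by (simp add: openin_PiE_gen)
qed

lemma product_open_contains_cylinder:
  fixes T :: "('i \<Rightarrow> 'a::metric_space) set"
  assumes "openin (product_topology (\<lambda>_. euclidean) UNIV) T" "f \<in> T"
  obtains K r where "finite K" "r > 0" "{g. \<forall>k\<in>K. dist (g k) (f k) < r} \<subseteq> T"
proof -
  have "\<exists>U. finite {i \<in> UNIV. U i \<noteq> topspace euclidean} \<and> (\<forall>i\<in>UNIV. openin euclidean (U i))
      \<and> f \<in> PiE UNIV U \<and> PiE UNIV U \<subseteq> T"
    using assms(1)[unfolded openin_product_topology_alt] assms(2) by (rule bspec)
  then obtain U where U: "finite {i. U i \<noteq> UNIV}" "\<And>i. open (U i)" "f \<in> PiE UNIV U" "PiE UNIV U \<subseteq> T"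
    by auto
  define K where "K = {i. U i \<noteq> UNIV}"
  have "\<exists>r>0. ball (f k) r \<subseteq> U k" for k
    using U(3) open_contains_ball_eq[OF U(2)[of k], of "f k"] by (simp add: PiE_iff)
  then obtain R where R: "\<And>k. R k > 0 \<and> ball (f k) (R k) \<subseteq> U k"
    by metis
  define r where "r = Min (insert 1 (R ` K))"
  have "finite K" using U(1) by (simp add: K_def)
  then have r: "r > 0" "\<And>k. k \<in> K \<Longrightarrow> r \<le> R k"
    using R by (simp_all add: r_def)
  have "{g. \<forall>k\<in>K. dist (g k) (f k) < r} \<subseteq> PiE UNIV U"
  proof (intro subsetI PiE_I)
    fix g i assume g: "g \<in> {g. \<forall>k\<in>K. dist (g k) (f k) < r}"
    show "g i \<in> U i"
    proof (cases "i \<in> K")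
      case True
      with g r(2) have "g i \<in> ball (f i) (R i)" by (fastforce simp: dist_commute)
      with True R show ?thesis by blast
    qed (simp add: K_def)
  qed simp
  with U(4) have "{g. \<forall>k\<in>K. dist (g k) (f k) < r} \<subseteq> T" by (rule subset_trans[rotated])
  with \<open>finite K\<close> r(1) show thesis by (rule that)
qed

lemma rho_sol_id: "rho \<phi> \<gamma> sol_id = sol_id"
  by (simp add: rho_def sol_id_def comp_def)

lemma sol_id_in_B_A: "0 < \<epsilon> \<Longrightarrow> sol_id \<in> B_A A \<epsilon>"
  using sol_id_in_solenoid by (auto simp: B_A_def sol_id_def delta_one)

lemma zero_in_B_star_A: "0 < C \<Longrightarrow> (\<lambda>_. 0) \<in> B_star_A A C"
  by (auto simp: B_star_A_def LG_def)

lemma expansive_imp_B_A_trivial: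
  assumes "endo_action \<phi>" "rho_basis \<phi> A" "expansive \<phi>"
  obtains \<epsilon> where "\<epsilon> > 0" "B_A A \<epsilon> \<subseteq> {sol_id}"
proof -
  obtain U where U: "openin sol_top U" "sol_id \<in> U"
    "(\<Inter>\<gamma>. {g \<in> solenoid. rho \<phi> \<gamma> g \<in> U}) = {sol_id}"
    using assms(3) unfolding expansive_def by blast
  obtain T where T: "openin (product_topology (\<lambda>_. euclidean) UNIV) T" "U = T \<inter> solenoid"
    using U(1) unfolding sol_top_def openin_subtopology by blast
  obtain K r where K: "finite K" "r > 0" "{g. \<forall>k\<in>K. dist (g k) (sol_id k) < r} \<subseteq> T"
    using product_open_contains_cylinder[OF T(1)] U(2) T(2) by blast
  obtain L where L: "L \<ge> 0"
    "\<And>N s \<gamma> x. group_seminorm N \<Longrightarrow> \<forall>a\<in>A. N a \<le> s \<Longrightarrow> 0 \<le> s \<Longrightarrow> x \<in> K \<Longrightarrow> N (\<phi> \<gamma> x) \<le> L * s"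
    using orbit_seminorm_bound[OF assms(1,2) K(1)] by blast
  define \<epsilon> where "\<epsilon> = r / (2 * pi * (L + 1))"
  have \<epsilon>: "\<epsilon> > 0" "2 * pi * (L + 1) * \<epsilon> = r"
    using K(2) L(1) by (simp_all add: \<epsilon>_def)
  have "g = sol_id" if small: "g \<in> B_A A \<epsilon>" for g
  proof -
    obtain s where g: "g \<in> solenoid" "s < \<epsilon>" "\<forall>a\<in>A. delta (g a) \<le> s"
      using small by (auto simp: B_A_def)
    define s' where "s' = max s 0"
    have s': "0 \<le> s'" "s' < \<epsilon>" "\<forall>a\<in>A. delta (g a) \<le> s'"
      using g \<epsilon>(1) by (auto simp: s'_def)
    have "dist (g (\<phi> \<gamma> k)) 1 < r" if "k \<in> K" for \<gamma> k
    proof -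
      have "dist (g (\<phi> \<gamma> k)) 1 \<le> 2 * pi * delta (g (\<phi> \<gamma> k))"
        using norm_minus_one_le_delta solenoid_norm[OF g(1)] by (simp add: dist_norm)
      also have "\<dots> \<le> 2 * pi * (L * s')"
        using L(2)[OF group_seminorm_delta[OF g(1)] s'(3) s'(1) that] by simp
      also have "\<dots> \<le> 2 * pi * ((L + 1) * s')"
        using s'(1) by (simp add: distrib_right)
      also have "\<dots> < 2 * pi * ((L + 1) * \<epsilon>)"
        using s'(2) L(1) by simp
      finally show ?thesis using \<epsilon>(2) by (simp add: mult.assoc)
    qed
    then have "rho \<phi> \<gamma> g \<in> U" for \<gamma>
      using K(3) T(2) solenoid_comp_additive[OF g(1) endo_action_additive[OF assms(1)]]
      by (auto simp: rho_def sol_id_def)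
    with g(1) U(3) show ?thesis by blast
  qed
  with \<epsilon>(1) that show thesis by blast
qed

lemma B_A_trivial_imp_expansive:
  assumes "rho_basis \<phi> A" "\<epsilon> > 0" "B_A A \<epsilon> \<subseteq> {sol_id}"
  shows "expansive \<phi>"
proof -
  obtain F where F: "finite F" "A = (\<Union>\<gamma>. \<phi> \<gamma> ` F)"
    using assms(1) by (auto simp: rho_basis_def)
  obtain r where r: "r > 0" "\<And>z. cmod z = 1 \<Longrightarrow> cmod (z - 1) < r \<Longrightarrow> delta z < \<epsilon> / 2"
    using delta_less_near_one[of "\<epsilon> / 2"] assms(2) by auto
  define U where "U = {g. \<forall>k\<in>F. dist (g k) (sol_id k) < r} \<inter> solenoid"
  have "openin sol_top U"
    unfolding U_def sol_top_def openin_subtopology using openin_cylinder_ball[OF F(1)] by blast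
  moreover have "sol_id \<in> U"
    using r(1) sol_id_in_solenoid by (simp add: U_def sol_id_def)
  moreover have "g = sol_id" if g: "g \<in> solenoid" "\<And>\<gamma>. rho \<phi> \<gamma> g \<in> U" for g
  proof -
    have "delta (g a) \<le> \<epsilon> / 2" if "a \<in> A" for a
    proof -
      obtain \<gamma> f where "f \<in> F" "a = \<phi> \<gamma> f" using \<open>a \<in> A\<close> F(2) by blast
      then have "cmod (g a - 1) < r" using g(2)[of \<gamma>] by (simp add: U_def rho_def sol_id_def dist_norm)
      then show ?thesis using r(2) solenoid_norm[OF g(1)] by (simp add: less_imp_le)
    qed
    then have "g \<in> B_A A \<epsilon>" using g(1) assms(2) by (auto simp: B_A_def intro!: exI[of _ "\<epsilon> / 2"])
    with assms(3) show ?thesis by blast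
  qed
  ultimately have "(\<Inter>\<gamma>. {g \<in> solenoid. rho \<phi> \<gamma> g \<in> U}) = {sol_id}"
    using sol_id_in_solenoid by (auto simp: rho_sol_id)
  with \<open>openin sol_top U\<close> \<open>sol_id \<in> U\<close> show ?thesis
    unfolding expansive_def by blast
qed

lemma B_star_A_imp_bounded_orbit:
  fixes \<phi> :: "'g::monoid_mult \<Rightarrow> 'd::ab_group_add \<Rightarrow> 'd"
  assumes "endo_action \<phi>" "rho_basis \<phi> A" "p \<in> B_star_A A C"
  shows "bounded_orbit \<phi> p"
  unfolding bounded_orbit_def
proof
  fix x :: 'd
  obtain s where p: "p \<in> LG" "\<forall>a\<in>A. \<bar>p a\<bar> \<le> s"
    using assms(3) by (auto simp: B_star_A_def)
  have s: "\<forall>a\<in>A. \<bar>p a\<bar> \<le> max s 0" "0 \<le> max s 0"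
    using p(2) by (simp_all add: le_max_iff_disj)
  have "finite {x}" by simp
  obtain L where "L \<ge> 0" and L: "\<And>N s \<gamma> y. group_seminorm N \<Longrightarrow> \<forall>a\<in>A. N a \<le> s \<Longrightarrow> 0 \<le> s \<Longrightarrow>
      y \<in> {x} \<Longrightarrow> N (\<phi> \<gamma> y) \<le> L * s"
    using orbit_seminorm_bound[OF assms(1,2) \<open>finite {x}\<close>] by blast
  have "\<bar>rho_e \<phi> \<gamma> p x\<bar> \<le> L * max s 0" for \<gamma>
    using L[OF group_seminorm_abs_LG[OF p(1)] s] by (simp add: rho_e_def)
  then show "\<exists>M. \<forall>\<gamma>. \<bar>rho_e \<phi> \<gamma> p x\<bar> \<le> M" by blast
qed

lemma bounded_orbit_imp_B_star_A:
  assumes "rho_basis \<phi> A" "p \<in> LG" "bounded_orbit \<phi> p"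
  obtains C where "C > 0" "p \<in> B_star_A A C"
proof -
  obtain F where F: "finite F" "A = (\<Union>\<gamma>. \<phi> \<gamma> ` F)"
    using assms(1) by (auto simp: rho_basis_def)
  obtain M where M: "\<And>x \<gamma>. \<bar>p (\<phi> \<gamma> x)\<bar> \<le> M x"
    using assms(3) unfolding bounded_orbit_def rho_e_def comp_def by metis
  have "\<bar>p a\<bar> \<le> (\<Sum>f\<in>F. \<bar>M f\<bar>)" if "a \<in> A" for a
  proof -
    obtain \<gamma> f where f: "f \<in> F" "a = \<phi> \<gamma> f" using \<open>a \<in> A\<close> F(2) by blast
    have "\<bar>p a\<bar> \<le> \<bar>M f\<bar>" using M[of \<gamma> f] f(2) by simp
    also have "\<dots> \<le> (\<Sum>f\<in>F. \<bar>M f\<bar>)" using F(1) f(1) by (intro member_le_sum) auto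
    finally show ?thesis .
  qed
  then have "p \<in> B_star_A A ((\<Sum>f\<in>F. \<bar>M f\<bar>) + 1)"
    using assms(2) by (auto simp: B_star_A_def intro!: exI[of _ "\<Sum>f\<in>F. \<bar>M f\<bar>"])
  moreover have "(\<Sum>f\<in>F. \<bar>M f\<bar>) + 1 > 0" by (simp add: add_nonneg_pos sum_nonneg)
  ultimately show thesis using that by blast
qed

theorem proposition4p5:
  fixes \<phi> :: "'g::monoid_mult \<Rightarrow> 'd::ab_group_add \<Rightarrow> 'd"
    and A :: "'d set"
  assumes "torsion_free TYPE('d)"
    and "finite_rank TYPE('d)"
    and "endo_action \<phi>"
    and "rho_basis \<phi> A"
  shows "(expansive \<phi> \<longleftrightarrow> (\<exists>\<epsilon>>0. B_A A \<epsilon> = {sol_id}))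
    \<and> ((\<exists>p\<in>LG. p \<noteq> (\<lambda>_. 0) \<and> bounded_orbit \<phi> p) \<longleftrightarrow> (\<exists>C>0. B_star_A A C \<noteq> {\<lambda>_. 0}))"
proof
  show "expansive \<phi> \<longleftrightarrow> (\<exists>\<epsilon>>0. B_A A \<epsilon> = {sol_id})"
  proof
    assume "expansive \<phi>"
    then obtain \<epsilon> where "\<epsilon> > 0" "B_A A \<epsilon> \<subseteq> {sol_id}"
      using expansive_imp_B_A_trivial[OF assms(3,4)] by blast
    with sol_id_in_B_A show "\<exists>\<epsilon>>0. B_A A \<epsilon> = {sol_id}" by blast
  next
    assume "\<exists>\<epsilon>>0. B_A A \<epsilon> = {sol_id}"
    then show "expansive \<phi>" using B_A_trivial_imp_expansive[OF assms(4)] by blast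
  qed
next
  show "(\<exists>p\<in>LG. p \<noteq> (\<lambda>_. 0) \<and> bounded_orbit \<phi> p) \<longleftrightarrow> (\<exists>C>0. B_star_A A C \<noteq> {\<lambda>_. 0})"
  proof
    assume "\<exists>p\<in>LG. p \<noteq> (\<lambda>_. 0) \<and> bounded_orbit \<phi> p"
    then obtain p where p: "p \<in> LG" "p \<noteq> (\<lambda>_. 0)" "bounded_orbit \<phi> p" by blast
    then obtain C where "C > 0" "p \<in> B_star_A A C"
      using bounded_orbit_imp_B_star_A[OF assms(4)] by blast
    with p(2) show "\<exists>C>0. B_star_A A C \<noteq> {\<lambda>_. 0}" by blast
  next
    assume "\<exists>C>0. B_star_A A C \<noteq> {\<lambda>_. 0}"
    then obtain C p where "p \<in> B_star_A A C" "p \<noteq> (\<lambda>_. 0)"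
      using zero_in_B_star_A by blast
    moreover from this(1) have "p \<in> LG" by (simp add: B_star_A_def)
    ultimately show "\<exists>p\<in>LG. p \<noteq> (\<lambda>_. 0) \<and> bounded_orbit \<phi> p"
      using B_star_A_imp_bounded_orbit[OF assms(3,4)] by blast
  qed
qed

end
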